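(* Let $m\in M^\oplus$, $P=P(m)$, $d\in N^\oplus$ and $\theta\in M_{\mathbb{R}}$. A $P$-framed representation $\nu:P\to E$ of $(Q,I)$ with $d(E)=d$, viewed as a representation of $(Q^\star,I^\star)$ of dimension vector $d^\star$ (with $\mathbb{C}$ at $\star$ and the arrows out of $\star$ given by $\nu$), is $(\theta-\epsilon\delta)^\star$-semistable for all sufficiently small $\epsilon>0$ (i.e. defines a point of $F(d,m,\theta)$) if and only if (a) $E\in\mathcal{F}(\theta)$ and (b) $\mathrm{coker}(\nu)\in\mathcal{T}(\theta)$.
   Context: $Q$ is a quiver with finite vertex set $V(Q)$, $I\subset\mathbb{C}Q$ a two-sided ideal spanned by combinations of paths of length $\ge2$, $\mathcal{A}=\mathrm{rep}(Q,I)$ the finite-dimensional $\mathbb{C}Q/I$-modules. $N=\mathbb{Z}^{V(Q)}$ with basis $(e_i)$, $N^\oplus$ non-negative vectors, $M=\mathrm{Hom}(N,\mathbb{Z})$, $M_{\mathbb{R}}=M\otimes\mathbb{R}$, $\delta\in M$ with $\delta(e_i)=1$, $M^\oplus=\{0\}\cup\{m:m(n)>0$ for all nonzero $n\in N^\oplus\}$. $\theta(E)=\theta(d(E))$ for dimension vectors $d(E)$. $\mathcal{T}(\theta)$ (resp. $\mathcal{F}(\theta)$) is the full subcategory of $E\in\mathcal{A}$ all of whose quotients $Q$ satisfy $\theta(Q)>0$ (resp. all of whose subobjects $A$ satisfy $\theta(A)\le0$). $P_i=(\mathbb{C}Q/I)\epsilon_i$ for the vertex idempotent $\epsilon_i$,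 $P(m)=\bigoplus_iP_i^{m(e_i)}$; a $P$-framed representation is $E\in\mathcal{A}$ with a module map $\nu:P\to E$, which is the same as choosing $m(e_i)$ vectors in $E_i$ for each $i$. $Q^\star$ adds a vertex $\star$ and $m(e_i)$ arrows $\star\to i$; $I^\star$ is generated by $I$. $d^\star=(d,1)\in N\oplus\mathbb{Z}$, and for $\eta\in M_{\mathbb{R}}$, $\eta^\star=(\eta,-\eta(d))$. A representation $E^\star$ of $(Q^\star,I^\star)$ is $\eta^\star$-semistable if $\eta^\star(E^\star)=0$ and every subrepresentation $A^\star$ has $\eta^\star(A^\star)\le0$. $F(d,m,\theta)$ denotes the moduli scheme $M^{ss}(d^\star,(\theta-\epsilon\delta)^\star)$ for $0<\epsilon\ll1$. *)

theory Defs
  imports Complex_Main "HOL-Library.Product_Plus"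
begin

text \<open>A path is a pair (i, as) of a start vertex i and a
 list of arrows as traversed from left to right.  Trivial paths are (i, []).\<close>

fun walk :: "('a \<Rightarrow> 'v) \<Rightarrow> ('a \<Rightarrow> 'v) \<Rightarrow> 'v \<Rightarrow> 'a list \<Rightarrow> bool" where
  "walk s t i [] = True"
| "walk s t i (a # as) = (s a = i \<and> walk s t (t a) as)"

definition endv :: "('a \<Rightarrow> 'v) \<Rightarrow> 'v \<Rightarrow> 'a list \<Rightarrow> 'v" where
  "endv t i as = (if as = [] then i else t (last as))"

text \<open>Elements of the path algebra CQ: finitely supported complex combinations of paths.\<close>
definition path_elt :: "('a \<Rightarrow> 'v) \<Rightarrow> ('a \<Rightarrow> 'v) \<Rightarrow> (('v \<times> 'a list) \<Rightarrow> complex) \<Rightarrow> bool" where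
  "path_elt s t r \<longleftrightarrow> finite {p. r p \<noteq> 0} \<and> (\<forall>p. r p \<noteq> 0 \<longrightarrow> walk s t (fst p) (snd p))"

definition pmul :: "('a \<Rightarrow> 'v) \<Rightarrow> ('v \<times> 'a list) \<Rightarrow> ('v \<times> 'a list) \<Rightarrow> ('v \<times> 'a list) option" where
  "pmul t p q = (if endv t (fst p) (snd p) = fst q then Some (fst p, snd p @ snd q) else None)"

definition pa_mult :: "('a \<Rightarrow> 'v) \<Rightarrow> (('v \<times> 'a list) \<Rightarrow> complex) \<Rightarrow> (('v \<times> 'a list) \<Rightarrow> complex)
    \<Rightarrow> (('v \<times> 'a list) \<Rightarrow> complex)" where
  "pa_mult t r u = (\<lambda>p. \<Sum>pq \<in> {pq. r (fst pq) \<noteq> 0 \<and> u (snd pq) \<noteq> 0 \<and> pmul t (fst pq) (snd pq) = Some p}.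
                          r (fst pq) * u (snd pq))"

definition admissible_ideal :: "('a \<Rightarrow> 'v) \<Rightarrow> ('a \<Rightarrow> 'v) \<Rightarrow> (('v \<times> 'a list) \<Rightarrow> complex) set \<Rightarrow> bool" where
  "admissible_ideal s t I \<longleftrightarrow>
     (\<lambda>_. 0) \<in> I \<and>
     (\<forall>r\<in>I. path_elt s t r \<and> (\<forall>p. r p \<noteq> 0 \<longrightarrow> 2 \<le> length (snd p))) \<and>
     (\<forall>r\<in>I. \<forall>u\<in>I. (\<lambda>p. r p + u p) \<in> I) \<and>
     (\<forall>r\<in>I. \<forall>c. (\<lambda>p. c * r p) \<in> I) \<and>
     (\<forall>r\<in>I. \<forall>u. path_elt s t u \<longrightarrow> pa_mult t r u \<in> I \<and> pa_mult t u r \<in> I)"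

text \<open>A representation lives in an ambient complex vector space 'e (scalar
 multiplication sc): a subspace E i at each vertex and maps \<rho> a, linear on
 E (src a), sending E (src a) into E (tgt a).\<close>

definition lin_on :: "(complex \<Rightarrow> 'e \<Rightarrow> 'e) \<Rightarrow> 'e set \<Rightarrow> ('e \<Rightarrow> 'e::ab_group_add) \<Rightarrow> bool" where
  "lin_on sc S f \<longleftrightarrow> (\<forall>x\<in>S. \<forall>y\<in>S. f (x + y) = f x + f y) \<and> (\<forall>c. \<forall>x\<in>S. f (sc c x) = sc c (f x))"

definition fin_dim_sub :: "(complex \<Rightarrow> 'e \<Rightarrow> 'e::ab_group_add) \<Rightarrow> 'e set \<Rightarrow> bool" where
  "fin_dim_sub sc S \<longleftrightarrow> module.subspace sc S \<and> (\<exists>B. finite B \<and> B \<subseteq> S \<and> module.span sc B = S)"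

definition is_rep :: "(complex \<Rightarrow> 'e \<Rightarrow> 'e::ab_group_add) \<Rightarrow> 'b set \<Rightarrow> ('b \<Rightarrow> 'w) \<Rightarrow> ('b \<Rightarrow> 'w)
    \<Rightarrow> ('w \<Rightarrow> 'e set) \<Rightarrow> ('b \<Rightarrow> 'e \<Rightarrow> 'e) \<Rightarrow> bool" where
  "is_rep sc Ar s t E \<rho> \<longleftrightarrow> (\<forall>i. fin_dim_sub sc (E i)) \<and>
     (\<forall>a\<in>Ar. lin_on sc (E (s a)) (\<rho> a) \<and> \<rho> a ` E (s a) \<subseteq> E (t a))"

text \<open>The representation is annihilated by the path algebra element r (it is a
 representation of (Q,I) iff annihilated by all r in I).  For x in E i, the
 component in E j of r.x is the sum over paths from i to j.\<close>
definition annihilates :: "(complex \<Rightarrow> 'e \<Rightarrow> 'e::ab_group_add) \<Rightarrow> ('a \<Rightarrow> 'v) \<Rightarrow> ('v \<Rightarrow> 'e set)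
    \<Rightarrow> ('a \<Rightarrow> 'e \<Rightarrow> 'e) \<Rightarrow> (('v \<times> 'a list) \<Rightarrow> complex) \<Rightarrow> bool" where
  "annihilates sc t E \<rho> r \<longleftrightarrow> (\<forall>i j. \<forall>x\<in>E i.
     (\<Sum>p \<in> {p. r p \<noteq> 0 \<and> fst p = i \<and> endv t i (snd p) = j}. sc (r p) (fold \<rho> (snd p) x)) = 0)"

definition dimvec :: "(complex \<Rightarrow> 'e \<Rightarrow> 'e::ab_group_add) \<Rightarrow> ('w \<Rightarrow> 'e set) \<Rightarrow> 'w \<Rightarrow> nat" where
  "dimvec sc E = (\<lambda>i. vector_space.dim sc (E i))"

definition wt :: "('w::finite \<Rightarrow> real) \<Rightarrow> ('w \<Rightarrow> nat) \<Rightarrow> real" where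
  "wt \<theta> n = (\<Sum>i\<in>UNIV. \<theta> i * real (n i))"

definition is_subrep :: "(complex \<Rightarrow> 'e \<Rightarrow> 'e::ab_group_add) \<Rightarrow> 'b set \<Rightarrow> ('b \<Rightarrow> 'w) \<Rightarrow> ('b \<Rightarrow> 'w)
    \<Rightarrow> ('w \<Rightarrow> 'e set) \<Rightarrow> ('b \<Rightarrow> 'e \<Rightarrow> 'e) \<Rightarrow> ('w \<Rightarrow> 'e set) \<Rightarrow> bool" where
  "is_subrep sc Ar s t E \<rho> A \<longleftrightarrow> (\<forall>i. module.subspace sc (A i) \<and> A i \<subseteq> E i) \<and>
     (\<forall>a\<in>Ar. \<rho> a ` A (s a) \<subseteq> A (t a))"

definition is_epi :: "(complex \<Rightarrow> 'e \<Rightarrow> 'e::ab_group_add) \<Rightarrow> 'b set \<Rightarrow> ('b \<Rightarrow> 'w) \<Rightarrow> ('b \<Rightarrow> 'w)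
    \<Rightarrow> ('w \<Rightarrow> 'e set) \<Rightarrow> ('b \<Rightarrow> 'e \<Rightarrow> 'e) \<Rightarrow> ('w \<Rightarrow> 'e set) \<Rightarrow> ('b \<Rightarrow> 'e \<Rightarrow> 'e)
    \<Rightarrow> ('w \<Rightarrow> 'e \<Rightarrow> 'e) \<Rightarrow> bool" where
  "is_epi sc Ar s t E \<rho> F \<sigma> f \<longleftrightarrow> is_rep sc Ar s t F \<sigma> \<and>
     (\<forall>i. lin_on sc (E i) (f i) \<and> f i ` E i = F i) \<and>
     (\<forall>a\<in>Ar. \<forall>x\<in>E (s a). f (t a) (\<rho> a x) = \<sigma> a (f (s a) x))"

definition semistable :: "(complex \<Rightarrow> 'e \<Rightarrow> 'e::ab_group_add) \<Rightarrow> 'b set \<Rightarrow> ('b \<Rightarrow> 'w::finite) \<Rightarrow> ('b \<Rightarrow> 'w)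
    \<Rightarrow> ('w \<Rightarrow> 'e set) \<Rightarrow> ('b \<Rightarrow> 'e \<Rightarrow> 'e) \<Rightarrow> ('w \<Rightarrow> real) \<Rightarrow> bool" where
  "semistable sc Ar s t E \<rho> \<eta> \<longleftrightarrow> wt \<eta> (dimvec sc E) = 0 \<and>
     (\<forall>A. is_subrep sc Ar s t E \<rho> A \<longrightarrow> wt \<eta> (dimvec sc A) \<le> 0)"

definition M_plus :: "('v::finite \<Rightarrow> int) \<Rightarrow> bool" where
  "M_plus m \<longleftrightarrow> m = (\<lambda>_. 0) \<or>
     (\<forall>n::'v \<Rightarrow> int. (\<forall>i. 0 \<le> n i) \<and> n \<noteq> (\<lambda>_. 0) \<longrightarrow> (\<Sum>i\<in>UNIV. m i * n i) > 0)"

definition in_Fcat :: "(complex \<Rightarrow> 'e \<Rightarrow> 'e::ab_group_add) \<Rightarrow> ('a \<Rightarrow> 'v::finite) \<Rightarrow> ('a \<Rightarrow> 'v)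
    \<Rightarrow> ('v \<Rightarrow> real) \<Rightarrow> ('v \<Rightarrow> 'e set) \<Rightarrow> ('a \<Rightarrow> 'e \<Rightarrow> 'e) \<Rightarrow> bool" where
  "in_Fcat sc s t \<theta> E \<rho> \<longleftrightarrow> (\<forall>A. is_subrep sc UNIV s t E \<rho> A \<longrightarrow> wt \<theta> (dimvec sc A) \<le> 0)"

text \<open>coker(nu) in T(theta): every nonzero quotient of coker(nu) has theta > 0.
 Quotients of coker(nu) = E / im(nu) are exactly the quotients f : E ->> F of E
 with f o nu = 0 (universal property of the cokernel); quotient objects are
 represented by surjective morphisms into representations in the same ambient
 space (every quotient is isomorphic to one of these).\<close>
definition coker_in_Tcat :: "(complex \<Rightarrow> 'e \<Rightarrow> 'e::ab_group_add) \<Rightarrow> ('a \<Rightarrow> 'v::finite) \<Rightarrow> ('a \<Rightarrow> 'v)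
    \<Rightarrow> ('v \<Rightarrow> real) \<Rightarrow> ('v \<Rightarrow> int) \<Rightarrow> ('v \<Rightarrow> 'e set) \<Rightarrow> ('a \<Rightarrow> 'e \<Rightarrow> 'e) \<Rightarrow> ('v \<Rightarrow> nat \<Rightarrow> 'e) \<Rightarrow> bool" where
  "coker_in_Tcat sc s t \<theta> m E \<rho> \<nu> \<longleftrightarrow>
     (\<forall>F \<sigma> f. is_epi sc UNIV s t E \<rho> F \<sigma> f \<and> (\<forall>i k. k < nat (m i) \<longrightarrow> f i (\<nu> i k) = 0)
        \<and> (\<exists>i. F i \<noteq> {0}) \<longrightarrow> wt \<theta> (dimvec sc F) > 0)"

text \<open>Vertices of Q*: Some i for i in Q, None for the framing vertex \<star>.
 Arrows: Inl a for a in Q, and Inr (i,k), k < m(e_i), from \<star> to i.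
 Ambient space of E*: 'e \<times> complex; E*_i = E_i \<times> 0, E*_\<star> = 0 \<times> C.\<close>

definition star_sc :: "(complex \<Rightarrow> 'e \<Rightarrow> 'e) \<Rightarrow> complex \<Rightarrow> 'e \<times> complex \<Rightarrow> 'e \<times> complex" where
  "star_sc sc c xz = (sc c (fst xz), c * snd xz)"

definition star_Ar :: "('v \<Rightarrow> int) \<Rightarrow> ('a + ('v \<times> nat)) set" where
  "star_Ar m = range Inl \<union> {Inr (i, k) | i k. k < nat (m i)}"

fun star_src :: "('a \<Rightarrow> 'v) \<Rightarrow> 'a + ('v \<times> nat) \<Rightarrow> 'v option" where
  "star_src s (Inl a) = Some (s a)"
| "star_src s (Inr ik) = None"

fun star_tgt :: "('a \<Rightarrow> 'v) \<Rightarrow> 'a + ('v \<times> nat) \<Rightarrow> 'v option" where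
  "star_tgt t (Inl a) = Some (t a)"
| "star_tgt t (Inr ik) = Some (fst ik)"

fun star_E :: "('v \<Rightarrow> 'e::zero set) \<Rightarrow> 'v option \<Rightarrow> ('e \<times> complex) set" where
  "star_E E (Some i) = E i \<times> {0}"
| "star_E E None = {0} \<times> UNIV"

fun star_rho :: "(complex \<Rightarrow> 'e \<Rightarrow> 'e) \<Rightarrow> ('a \<Rightarrow> 'e \<Rightarrow> 'e) \<Rightarrow> ('v \<Rightarrow> nat \<Rightarrow> 'e)
    \<Rightarrow> 'a + ('v \<times> nat) \<Rightarrow> 'e \<times> complex \<Rightarrow> 'e \<times> complex" where
  "star_rho sc \<rho> \<nu> (Inl a) xz = (\<rho> a (fst xz), 0)"
| "star_rho sc \<rho> \<nu> (Inr ik) xz = (sc (snd xz) (\<nu> (fst ik) (snd ik)), 0)"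

fun star_wt :: "('v::finite \<Rightarrow> real) \<Rightarrow> ('v \<Rightarrow> nat) \<Rightarrow> 'v option \<Rightarrow> real" where
  "star_wt \<eta> d (Some i) = \<eta> i"
| "star_wt \<eta> d None = - wt \<eta> d"

end

theory Submission
  imports Defs "HOL-Library.FuncSet"
begin

(* A subrepresentation of the framed representation E* is a subrepresentation A of E with
   either 0 or \<complex> at the framing vertex, and the latter is possible exactly when A contains
   the image of \<nu>.  Writing \<delta>(n) = wt (\<lambda>_. 1) n for the total dimension, and using that
   (\<theta> - \<epsilon>\<delta>)* vanishes on E*, semistability of E* therefore says
   \<theta>(A) \<le> \<epsilon>\<delta>(A) for every A, and \<epsilon>(\<delta>(E) - \<delta>(A)) \<le> \<theta>(E) - \<theta>(A) for every A containing im \<nu>.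
   For all small \<epsilon> > 0 the first family amounts to \<theta>(A) \<le> 0, i.e. E \<in> F(\<theta>).  Only finitely
   many dimension vectors occur, so the second family holds uniformly for small \<epsilon> iff
   \<theta>(E/A) = \<theta>(E) - \<theta>(A) > 0 for every proper A \<supseteq> im \<nu>; passing between such A and the quotients
   of E killing im \<nu> (via kernels) this is coker \<nu> \<in> T(\<theta>). *)

section \<open>Finite-dimensional subspaces\<close>

context vector_space
begin

lemma finite_basis_of_finite_span:
  assumes "finite B0" "V \<subseteq> span B0"
  obtains B where "B \<subseteq> V" "finite B" "independent B" "V \<subseteq> span B" "card B = dim V"
proof -
  obtain B where B: "B \<subseteq> V" "independent B" "V \<subseteq> span B" "card B = dim V"
    using basis_exists by blast
  moreover have "finite B"
    using independent_span_bound[OF assms(1) B(2)] B(1) assms(2) by auto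
  ultimately show ?thesis using that by blast
qed

lemma dim_subset_finite_span:
  assumes "finite B0" "V \<subseteq> span B0" "S \<subseteq> V"
  shows "dim S \<le> dim V"
proof -
  obtain B where "B \<subseteq> V" "finite B" "independent B" "V \<subseteq> span B" "card B = dim V"
    using finite_basis_of_finite_span[OF assms(1,2)] .
  then show ?thesis using dim_le_card[of S B] assms(3) by auto
qed

lemma dim_eq_0_finite_span:
  assumes "finite B0" "V \<subseteq> span B0"
  shows "dim V = 0 \<longleftrightarrow> V \<subseteq> {0}"
proof
  assume "dim V = 0"
  obtain B where "B \<subseteq> V" "finite B" "independent B" "V \<subseteq> span B" "card B = dim V"
    using finite_basis_of_finite_span[OF assms] .
  with \<open>dim V = 0\<close> show "V \<subseteq> {0}" by simp
next
  assume "V \<subseteq> {0}"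
  then show "dim V = 0" using dim_le_card[of V "{}"] by simp
qed

lemma extend_basis_finite_span:
  assumes "subspace A" "A \<subseteq> V" "subspace V" "finite B0" "span B0 = V"
  obtains BA BC where "finite BA" "finite BC" "BA \<inter> BC = {}" "independent (BA \<union> BC)"
    "span BA = A" "span (BA \<union> BC) = V" "card BC = dim V - dim A"
proof -
  obtain BA where BA: "BA \<subseteq> A" "finite BA" "independent BA" "A \<subseteq> span BA" "card BA = dim A"
    using finite_basis_of_finite_span[OF assms(4), of A] assms(2,5) by blast
  obtain BE where BE: "BA \<subseteq> BE" "BE \<subseteq> V" "independent BE" "V \<subseteq> span BE"
    using maximal_independent_subset_extend[of BA V] BA(1,3) assms(2) by blast
  have "finite BE"
    using independent_span_bound[OF assms(4) BE(3)] BE(2) assms(5) by auto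
  have "card BE = dim V" using basis_card_eq_dim[OF BE(2) BE(4) BE(3)] .
  have "span BA = A" using span_minimal[OF BA(1) assms(1)] BA(4) by auto
  moreover have "span BE = V" using span_minimal[OF BE(2) assms(3)] BE(4) by auto
  moreover have "card (BE - BA) = dim V - dim A"
    using card_Diff_subset[OF BA(2) BE(1)] \<open>card BE = dim V\<close> BA(5) by simp
  moreover have "BA \<union> (BE - BA) = BE" using BE(1) by auto
  ultimately show ?thesis
    using that[of BA "BE - BA"] BA(2) \<open>finite BE\<close> BE(3) by auto
qed

lemma in_span_disjoint_eq_0:
  assumes "independent (S \<union> T)" "S \<inter> T = {}" "x \<in> span S" "x \<in> span T"
  shows "x = 0"
proof -
  have "representation (S \<union> T) x = representation S x"
    by (rule representation_extend[OF assms(1) assms(3)]) auto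
  moreover have "representation (S \<union> T) x = representation T x"
    by (rule representation_extend[OF assms(1) assms(4)]) auto
  ultimately have rep0: "representation (S \<union> T) x b = 0" for b
    using representation_ne_zero[of S x b] representation_ne_zero[of T x b] assms(2)
    by (metis disjoint_iff)
  have "x \<in> span (S \<union> T)" using assms(3) span_mono[of S "S \<union> T"] by auto
  from sum_nonzero_representation_eq[OF assms(1) this] show ?thesis
    using rep0 by simp
qed

end

section \<open>Weights of dimension vectors\<close>

lemma wt_option:
  "wt (\<eta> :: 'v::finite option \<Rightarrow> real) n = \<eta> None * real (n None) + (\<Sum>i\<in>UNIV. \<eta> (Some i) * real (n (Some i)))"
  unfolding wt_def UNIV_option_conv by (simp add: sum.reindex)

lemma wt_shift: "wt (\<lambda>i. \<theta> i - \<epsilon>) n = wt \<theta> n - \<epsilon> * wt (\<lambda>_. 1) n"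
  unfolding wt_def by (simp add: left_diff_distrib sum_subtractf sum_distrib_left)

lemma wt_diff: "(\<And>i. k i \<le> n i) \<Longrightarrow> wt \<theta> (\<lambda>i. n i - k i) = wt \<theta> n - wt \<theta> k"
  unfolding wt_def by (simp add: of_nat_diff right_diff_distrib sum_subtractf)

lemma wt_one_nonneg: "0 \<le> wt (\<lambda>_. 1) n"
  unfolding wt_def by (simp add: sum_nonneg)

lemma wt_one_eq_imp_eq:
  assumes "\<And>i. k i \<le> n i" "wt (\<lambda>_. 1) k = wt (\<lambda>_. 1) n"
  shows "k = n"
proof (rule ccontr)
  assume "k \<noteq> n"
  then obtain i where "k i < n i" using assms(1) le_neq_implies_less by blast
  then have "wt (\<lambda>_. 1) k < wt (\<lambda>_. 1) n"
    unfolding wt_def using assms(1) by (intro sum_strict_mono_ex1) auto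
  with assms(2) show False by simp
qed

lemma eventually_at_right_0_mult_less:
  fixes a b :: real
  assumes "0 \<le> b" "0 < a"
  shows "eventually (\<lambda>\<epsilon>. \<epsilon> * b < a) (at_right 0)"
proof -
  have "eventually (\<lambda>\<epsilon>. \<epsilon> < a / (b + 1)) (at_right 0)"
    using assms by (intro order_tendstoD(2)[OF tendsto_ident_at]) simp
  then show ?thesis
    using eventually_at_right_less[of "0::real"]
  proof (rule eventually_elim2)
    fix \<epsilon> :: real assume "\<epsilon> < a / (b + 1)" "0 < \<epsilon>"
    then have "\<epsilon> * (b + 1) < a" using assms by (simp add: pos_less_divide_eq)
    then show "\<epsilon> * b < a" using \<open>0 < \<epsilon>\<close> by (simp add: distrib_left)
  qed
qed

lemma eventually_at_right_0_le_mult_iff: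
  fixes a b :: real
  assumes "0 \<le> b"
  shows "eventually (\<lambda>\<epsilon>. a \<le> \<epsilon> * b) (at_right 0) \<longleftrightarrow> a \<le> 0"
proof
  assume ev: "eventually (\<lambda>\<epsilon>. a \<le> \<epsilon> * b) (at_right 0)"
  show "a \<le> 0"
  proof (rule ccontr)
    assume "\<not> a \<le> 0"
    then have "eventually (\<lambda>\<epsilon>. \<epsilon> * b < a) (at_right 0)"
      using assms by (intro eventually_at_right_0_mult_less) simp_all
    with ev have "eventually (\<lambda>_. False) (at_right (0::real))"
      by eventually_elim simp
    then show False by simp
  qed
next
  assume "a \<le> 0"
  show "eventually (\<lambda>\<epsilon>. a \<le> \<epsilon> * b) (at_right 0)"
    using eventually_at_right_less[of "0::real"]
  proof (rule eventually_mono)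
    fix \<epsilon> :: real assume "0 < \<epsilon>"
    then have "0 \<le> \<epsilon> * b" using assms by simp
    then show "a \<le> \<epsilon> * b" using \<open>a \<le> 0\<close> by linarith
  qed
qed

lemma eventually_at_right_0_mult_le_iff:
  fixes a b :: real
  assumes "0 \<le> b"
  shows "eventually (\<lambda>\<epsilon>. \<epsilon> * b \<le> a) (at_right 0) \<longleftrightarrow> 0 < a \<or> (a = 0 \<and> b = 0)"
proof
  assume "eventually (\<lambda>\<epsilon>. \<epsilon> * b \<le> a) (at_right 0)"
  with eventually_at_right_less[of "0::real"]
  have "eventually (\<lambda>\<epsilon>. 0 < \<epsilon> \<and> \<epsilon> * b \<le> a) (at_right 0)"
    by eventually_elim simp
  then obtain \<epsilon> :: real where "0 < \<epsilon>" "\<epsilon> * b \<le> a"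
    using eventually_happens by fastforce
  moreover have "0 \<le> \<epsilon> * b" using \<open>0 < \<epsilon>\<close> assms by simp
  moreover have "b = 0" if "a = 0"
    using that \<open>\<epsilon> * b \<le> a\<close> \<open>0 < \<epsilon>\<close> assms by (simp add: mult_le_0_iff)
  ultimately show "0 < a \<or> (a = 0 \<and> b = 0)" by linarith
next
  assume "0 < a \<or> (a = 0 \<and> b = 0)"
  then show "eventually (\<lambda>\<epsilon>. \<epsilon> * b \<le> a) (at_right 0)"
  proof
    assume "0 < a"
    show ?thesis
      using eventually_at_right_0_mult_less[OF assms \<open>0 < a\<close>] by (rule eventually_mono) simp
  qed simp
qed

lemma eventually_at_right_0_wt_le_iff:
  assumes le: "\<And>i. n i \<le> d i"
  shows "eventually (\<lambda>\<epsilon>. \<epsilon> * (wt (\<lambda>_. 1) d - wt (\<lambda>_. 1) n) \<le> wt \<theta> d - wt \<theta> n) (at_right 0)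
    \<longleftrightarrow> n = d \<or> wt \<theta> n < wt \<theta> d"
proof -
  have "0 \<le> wt (\<lambda>_. 1) d - wt (\<lambda>_. 1) n"
    using wt_diff[of n d, OF le] wt_one_nonneg[of "\<lambda>i. d i - n i"] by simp
  moreover have "wt (\<lambda>_. 1) d - wt (\<lambda>_. 1) n = 0 \<longleftrightarrow> n = d"
    using wt_one_eq_imp_eq[of n d, OF le] by auto
  ultimately show ?thesis using eventually_at_right_0_mult_le_iff by auto
qed

section \<open>Subrepresentations and quotients\<close>

lemma lin_on_subset: "lin_on sc V f \<Longrightarrow> S \<subseteq> V \<Longrightarrow> lin_on sc S f"
  unfolding lin_on_def by blast

lemma lin_on_comp:
  assumes "lin_on sc V g" "g ` V \<subseteq> W" "lin_on sc W h"
  shows "lin_on sc V (\<lambda>x. h (g x))"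
  using assms unfolding lin_on_def by (simp add: image_subset_iff)

locale complex_vector_space = vector_space scale
  for scale :: "complex \<Rightarrow> 'b::ab_group_add \<Rightarrow> 'b"
begin

lemma lin_on_0: "lin_on scale S f \<Longrightarrow> 0 \<in> S \<Longrightarrow> f 0 = 0"
  unfolding lin_on_def by (metis add.right_neutral add_left_imp_eq)

lemma lin_on_diff:
  assumes "lin_on scale S f" "subspace S" "x \<in> S" "y \<in> S"
  shows "f (x - y) = f x - f y"
proof -
  have "f x = f ((x - y) + y)" by simp
  also have "\<dots> = f (x - y) + f y"
    using assms unfolding lin_on_def by (meson subspace_diff)
  finally show ?thesis by (simp add: algebra_simps)
qed

lemma lin_on_sum:
  assumes "lin_on scale E f" "subspace E" "finite S" "S \<subseteq> E"
  shows "f (\<Sum>b\<in>S. scale (u b) b) = (\<Sum>b\<in>S. scale (u b) (f b))"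
  using assms(3,4)
proof (induction S rule: finite_induct)
  case empty
  then show ?case using lin_on_0[OF assms(1) subspace_0[OF assms(2)]] by simp
next
  case (insert x F)
  have "(\<Sum>b\<in>F. scale (u b) b) \<in> E" "scale (u x) x \<in> E"
    using insert assms(2) by (auto intro: subspace_sum subspace_scale)
  then have "f (scale (u x) x + (\<Sum>b\<in>F. scale (u b) b)) = f (scale (u x) x) + f (\<Sum>b\<in>F. scale (u b) b)"
    using assms(1) unfolding lin_on_def by blast
  then show ?case using insert assms(1) unfolding lin_on_def by simp
qed

lemma kernel_subspace:
  assumes "subspace V" "lin_on scale V f"
  shows "subspace {x\<in>V. f x = 0}"
  unfolding subspace_def
proof (intro conjI ballI allI)
  show "0 \<in> {x\<in>V. f x = 0}"
    using lin_on_0[OF assms(2) subspace_0[OF assms(1)]] subspace_0[OF assms(1)] by simp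
next
  fix x y assume "x \<in> {x\<in>V. f x = 0}" "y \<in> {x\<in>V. f x = 0}"
  then show "x + y \<in> {x\<in>V. f x = 0}" using assms unfolding lin_on_def by (auto intro: subspace_add)
next
  fix c x assume "x \<in> {x\<in>V. f x = 0}"
  then show "scale c x \<in> {x\<in>V. f x = 0}" using assms unfolding lin_on_def by (auto intro: subspace_scale)
qed

lemma lin_on_independent_image:
  assumes "lin_on scale V f" "subspace V" "finite C" "independent C" "C \<subseteq> V"
    and ker: "\<And>x. x \<in> span C \<Longrightarrow> f x = 0 \<Longrightarrow> x = 0"
  shows "inj_on f C" "independent (f ` C)"
proof -
  have span_C: "span C \<subseteq> V" using assms(2,5) by (simp add: span_minimal)
  show inj: "inj_on f C"
  proof
    fix c1 c2 assume c: "c1 \<in> C" "c2 \<in> C" "f c1 = f c2"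
    have "f (c1 - c2) = 0" using lin_on_diff[OF assms(1,2), of c1 c2] c assms(5) by auto
    moreover have "c1 - c2 \<in> span C" using c by (auto intro: span_diff span_base)
    ultimately have "c1 - c2 = 0" by (rule ker[rotated])
    then show "c1 = c2" by simp
  qed
  show "independent (f ` C)"
  proof (rule independent_if_scalars_zero)
    show "finite (f ` C)" using assms(3) by simp
  next
    fix g y assume s: "(\<Sum>x\<in>f ` C. scale (g x) x) = 0" and y: "y \<in> f ` C"
    have "f (\<Sum>c\<in>C. scale (g (f c)) c) = (\<Sum>x\<in>f ` C. scale (g x) x)"
      using lin_on_sum[OF assms(1,2,3,5)] by (simp add: sum.reindex[OF inj])
    then have "f (\<Sum>c\<in>C. scale (g (f c)) c) = 0" using s by simp
    moreover have "(\<Sum>c\<in>C. scale (g (f c)) c) \<in> span C"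
      by (auto intro: span_sum span_scale span_base)
    ultimately have "(\<Sum>c\<in>C. scale (g (f c)) c) = 0" by (rule ker[rotated])
    then have "\<forall>c\<in>C. g (f c) = 0"
      using independentD[OF assms(4,3) subset_refl, of "\<lambda>c. g (f c)"] by blast
    then show "g y = 0" using y by auto
  qed
qed

lemma rank_nullity_on:
  assumes "subspace V" "finite B0" "span B0 = V" "lin_on scale V f" "f ` V = W"
  shows "dim W = dim V - dim {x\<in>V. f x = 0}"
proof -
  let ?K = "{x\<in>V. f x = 0}"
  have "?K \<subseteq> V" by blast
  obtain BK BC where B: "finite BK" "finite BC" "BK \<inter> BC = {}" "independent (BK \<union> BC)"
    "span BK = ?K" "span (BK \<union> BC) = V" "card BC = dim V - dim ?K"
    by (rule extend_basis_finite_span[OF kernel_subspace[OF assms(1,4)] \<open>?K \<subseteq> V\<close> assms(1-3)])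
  have BKV: "BK \<subseteq> V" and BCV: "BC \<subseteq> V" using B(6) span_superset[of "BK \<union> BC"] by auto
  have ker: "x = 0" if "x \<in> span BC" "f x = 0" for x
  proof -
    have "x \<in> V" using that(1) span_minimal[OF BCV assms(1)] by blast
    then have "x \<in> span BK" using that(2) B(5) by simp
    then show ?thesis using in_span_disjoint_eq_0[OF B(4) B(3)] that(1) by blast
  qed
  have iBC: "independent BC" using independent_mono[OF B(4)] by auto
  note img = lin_on_independent_image[OF assms(4,1) B(2) iBC BCV ker]
  have "W \<subseteq> span (f ` BC)"
  proof
    fix y assume "y \<in> W"
    then obtain x where x: "x \<in> V" "y = f x" using assms(5) by auto
    have "x \<in> span (BK \<union> BC)" using x(1) B(6) by simp
    then obtain u where u: "x = (\<Sum>v\<in>BK \<union> BC. scale (u v) v)"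
      using span_finite[of "BK \<union> BC"] B(1,2) by auto
    have "f x = (\<Sum>v\<in>BK \<union> BC. scale (u v) (f v))"
      unfolding u using lin_on_sum[OF assms(4,1), of "BK \<union> BC" u] B(1,2) BKV BCV by simp
    also have "\<dots> = (\<Sum>v\<in>BK. scale (u v) (f v)) + (\<Sum>v\<in>BC. scale (u v) (f v))"
      by (rule sum.union_disjoint[OF B(1,2,3)])
    also have "(\<Sum>v\<in>BK. scale (u v) (f v)) = 0"
      using B(5) span_superset[of BK] by (intro sum.neutral) auto
    finally show "y \<in> span (f ` BC)" using x by (auto intro: span_sum span_scale span_base)
  qed
  moreover have "f ` BC \<subseteq> W" using assms(5) BCV by auto
  ultimately have "card (f ` BC) = dim W" using basis_card_eq_dim img(2) by blast
  then show ?thesis using card_image[OF img(1)] B(7) by simp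
qed

lemma complement_projection_exists:
  assumes "subspace A" "A \<subseteq> V" "subspace V" "finite B0" "span B0 = V"
  obtains p F where "lin_on scale V p" "p ` V = F" "fin_dim_sub scale F" "F \<subseteq> V"
    "\<forall>x\<in>A. p x = 0" "\<forall>x\<in>V. x - p x \<in> A" "dim F = dim V - dim A"
proof -
  obtain BA BC where B: "finite BA" "finite BC" "BA \<inter> BC = {}" "independent (BA \<union> BC)"
    "span BA = A" "span (BA \<union> BC) = V" "card BC = dim V - dim A"
    by (rule extend_basis_finite_span[OF assms])
  define R where "R = representation (BA \<union> BC)"
  define p where "p x = (\<Sum>b\<in>BC. scale (R x b) b)" for x
  have iBC: "independent BC" using independent_mono[OF B(4)] by auto
  have FV: "span BC \<subseteq> V" using B(6) span_mono[of BC "BA \<union> BC"] by auto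
  have p_span: "p x \<in> span BC" for x unfolding p_def by (auto intro: span_sum span_scale span_base)
  have p_id: "p y = y" if "y \<in> span BC" for y
  proof -
    have "R y = representation BC y" unfolding R_def
      by (rule representation_extend[OF B(4) that]) blast
    then show ?thesis
      unfolding p_def using sum_representation_eq[OF iBC that B(2) subset_refl] by simp
  qed
  have lin: "lin_on scale V p"
    unfolding lin_on_def
  proof (intro conjI ballI allI)
    fix x y assume "x \<in> V" "y \<in> V"
    then have "R (x + y) = (\<lambda>b. R x b + R y b)"
      unfolding R_def using representation_add[OF B(4), of y x] B(6) by simp
    then show "p (x + y) = p x + p y"
      unfolding p_def by (simp add: scale_left_distrib sum.distrib)
  next
    fix c x assume "x \<in> V"
    then have "R (scale c x) = (\<lambda>b. c * R x b)"
      unfolding R_def using representation_scale[OF B(4), of x c] B(6) by simp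
    then show "p (scale c x) = scale c (p x)"
      unfolding p_def by (simp add: scale_sum_right scale_scale)
  qed
  have img: "p ` V = span BC"
  proof
    show "p ` V \<subseteq> span BC" using p_span by auto
    show "span BC \<subseteq> p ` V"
    proof
      fix y assume "y \<in> span BC"
      then show "y \<in> p ` V" using p_id FV by (intro image_eqI[of y p y]) auto
    qed
  qed
  have fin: "fin_dim_sub scale (span BC)"
    unfolding fin_dim_sub_def using B(2) span_superset subspace_span by blast
  have kill: "p x = 0" if "x \<in> A" for x
  proof -
    have "x \<in> span BA" using that B(5) by simp
    then have "R x = representation BA x" unfolding R_def
      by (rule representation_extend[OF B(4)]) blast
    then have "R x b = 0" if "b \<in> BC" for b
      using that B(3) representation_ne_zero[of BA x b] by auto
    then show ?thesis unfolding p_def by simp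
  qed
  have diff: "x - p x \<in> A" if "x \<in> V" for x
  proof -
    have "x = (\<Sum>b\<in>BA \<union> BC. scale (R x b) b)"
      unfolding R_def using sum_representation_eq[OF B(4), of x "BA \<union> BC"] B(1,2,6) that by simp
    also have "\<dots> = (\<Sum>b\<in>BA. scale (R x b) b) + p x"
      unfolding p_def by (rule sum.union_disjoint[OF B(1,2,3)])
    finally have "x - p x = (\<Sum>b\<in>BA. scale (R x b) b)" by (simp add: algebra_simps)
    also have "\<dots> \<in> A" unfolding B(5)[symmetric] by (auto intro: span_sum span_scale span_base)
    finally show ?thesis .
  qed
  have "dim (span BC) = dim V - dim A"
    using dim_span_eq_card_independent[OF iBC] B(7) by simp
  with lin img fin FV kill diff show ?thesis by (intro that[of p "span BC"]) auto
qed

lemma fin_dim_sub_dim_eq_0_iff: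
  assumes "fin_dim_sub scale S"
  shows "dim S = 0 \<longleftrightarrow> S = {0}"
proof -
  obtain B0 where "subspace S" "finite B0" "span B0 = S"
    using assms unfolding fin_dim_sub_def by blast
  then show ?thesis using dim_eq_0_finite_span[of B0 S] subspace_0[of S] by auto
qed

lemma subrep_dim_le:
  assumes "is_rep scale Ar src tgt E \<rho>" "is_subrep scale Ar src tgt E \<rho> A"
  shows "dim (A i) \<le> dim (E i)"
proof -
  obtain B0 where "finite B0" "span B0 = E i"
    using assms(1) unfolding is_rep_def fin_dim_sub_def by blast
  moreover have "A i \<subseteq> E i" using assms(2) unfolding is_subrep_def by blast
  ultimately show ?thesis using dim_subset_finite_span[of B0 "E i" "A i"] by simp
qed

lemma quotient_by_subrep_exists:
  assumes rep: "is_rep scale UNIV src tgt E \<rho>" and sub: "is_subrep scale UNIV src tgt E \<rho> A"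
  obtains F \<sigma> f where "is_epi scale UNIV src tgt E \<rho> F \<sigma> f" "\<forall>i. \<forall>x\<in>A i. f i x = 0"
    "\<forall>i. dim (F i) = dim (E i) - dim (A i)"
proof -
  define Q where "Q i g G \<longleftrightarrow> lin_on scale (E i) g \<and> g ` E i = G \<and> fin_dim_sub scale G \<and> G \<subseteq> E i \<and>
      (\<forall>x\<in>A i. g x = 0) \<and> (\<forall>x\<in>E i. x - g x \<in> A i) \<and> dim G = dim (E i) - dim (A i)" for i g G
  have "\<exists>gG. Q i (fst gG) (snd gG)" for i
  proof -
    have A: "subspace (A i)" "A i \<subseteq> E i" using sub unfolding is_subrep_def by auto
    obtain B0 where E: "subspace (E i)" "finite B0" "span B0 = E i"
      using rep unfolding is_rep_def fin_dim_sub_def by blast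
    obtain g G where "Q i g G"
      unfolding Q_def by (rule complement_projection_exists[OF A E]) blast
    then show ?thesis by auto
  qed
  then obtain fF where fF: "\<forall>i. Q i (fst (fF i)) (snd (fF i))" using choice by meson
  define f where "f i = fst (fF i)" for i
  define F where "F i = snd (fF i)" for i
  have "Q i (f i) (F i)" for i using fF unfolding f_def F_def by blast
  then have f: "\<And>i. lin_on scale (E i) (f i)" "\<And>i. f i ` E i = F i"
    "\<And>i. fin_dim_sub scale (F i)" "\<And>i. F i \<subseteq> E i" "\<And>i. \<forall>x\<in>A i. f i x = 0"
    "\<And>i. \<forall>x\<in>E i. x - f i x \<in> A i" "\<And>i. dim (F i) = dim (E i) - dim (A i)"
    unfolding Q_def by blast+
  define \<sigma> where "\<sigma> a y = f (tgt a) (\<rho> a y)" for a y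
  have \<rho>: "lin_on scale (E (src a)) (\<rho> a)" "\<rho> a ` E (src a) \<subseteq> E (tgt a)"
    "\<rho> a ` A (src a) \<subseteq> A (tgt a)" for a
    using rep sub unfolding is_rep_def is_subrep_def by auto
  have sE: "subspace (E i)" and sA: "subspace (A i)" "A i \<subseteq> E i" for i
    using rep sub unfolding is_rep_def fin_dim_sub_def is_subrep_def by auto
  have comm: "f (tgt a) (\<rho> a x) = \<sigma> a (f (src a) x)" if x: "x \<in> E (src a)" for a x
  proof -
    have fx: "f (src a) x \<in> E (src a)" using f(2,4) x by blast
    have "x - f (src a) x \<in> A (src a)" using f(6) x by blast
    then have "\<rho> a (x - f (src a) x) \<in> A (tgt a)" using \<rho>(3) by blast
    moreover have "\<rho> a (x - f (src a) x) = \<rho> a x - \<rho> a (f (src a) x)"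
      by (rule lin_on_diff[OF \<rho>(1) sE x fx])
    ultimately have "f (tgt a) (\<rho> a x - \<rho> a (f (src a) x)) = 0" using f(5) by simp
    moreover have "\<rho> a x \<in> E (tgt a)" "\<rho> a (f (src a) x) \<in> E (tgt a)" using \<rho>(2) x fx by auto
    ultimately show ?thesis
      unfolding \<sigma>_def using lin_on_diff[OF f(1) sE] by simp
  qed
  have "is_rep scale UNIV src tgt F \<sigma>"
    unfolding is_rep_def
  proof (intro conjI allI ballI)
    fix a :: 'a
    have "F (src a) \<subseteq> E (src a)" by (rule f(4))
    then show "lin_on scale (F (src a)) (\<sigma> a)"
      unfolding \<sigma>_def using lin_on_comp[OF \<rho>(1,2) f(1)] lin_on_subset by blast
    show "\<sigma> a ` F (src a) \<subseteq> F (tgt a)" unfolding \<sigma>_def using f(2) \<rho>(2) f(4) by blast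
  qed (use f(3) in blast)
  then have "is_epi scale UNIV src tgt E \<rho> F \<sigma> f"
    unfolding is_epi_def using f(1,2) comm by blast
  then show ?thesis using that f(5,7) by blast
qed

lemma kernel_of_epi:
  assumes rep: "is_rep scale UNIV src tgt E \<rho>" and epi: "is_epi scale UNIV src tgt E \<rho> F \<sigma> f"
  shows "is_subrep scale UNIV src tgt E \<rho> (\<lambda>i. {x\<in>E i. f i x = 0})"
    and "dim (F i) = dim (E i) - dim {x\<in>E i. f i x = 0}"
proof -
  have sE: "subspace (E i)" for i using rep unfolding is_rep_def fin_dim_sub_def by blast
  have f: "lin_on scale (E i) (f i)" "f i ` E i = F i" for i using epi unfolding is_epi_def by blast+
  obtain B0 where "finite B0" "span B0 = E i" using rep unfolding is_rep_def fin_dim_sub_def by blast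
  then show "dim (F i) = dim (E i) - dim {x\<in>E i. f i x = 0}"
    by (rule rank_nullity_on[OF sE _ _ f])
  have \<rho>: "\<rho> a x \<in> E (tgt a)" if "x \<in> E (src a)" for a x
    using rep that unfolding is_rep_def by blast
  have comm: "f (tgt a) (\<rho> a x) = \<sigma> a (f (src a) x)" if "x \<in> E (src a)" for a x
    using epi that unfolding is_epi_def by blast
  have \<sigma>0: "\<sigma> a 0 = 0" for a
  proof -
    have "is_rep scale UNIV src tgt F \<sigma>" using epi unfolding is_epi_def by blast
    then have "lin_on scale (F (src a)) (\<sigma> a)" "subspace (F (src a))"
      unfolding is_rep_def fin_dim_sub_def by blast+
    then show ?thesis using lin_on_0 subspace_0 by blast
  qed
  show "is_subrep scale UNIV src tgt E \<rho> (\<lambda>i. {x\<in>E i. f i x = 0})"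
    unfolding is_subrep_def using kernel_subspace[OF sE f(1)] \<rho> comm \<sigma>0 by auto
qed

section \<open>The framed representation\<close>

lemma vector_space_star_sc: "vector_space (star_sc scale)"
  unfolding vector_space_def star_sc_def
  by (simp add: prod_eq_iff scale_right_distrib scale_left_distrib ring_distribs)

lemma module_star_sc: "module (star_sc scale)"
  using vector_space_star_sc module_iff_vector_space by blast

lemma module_hom_star_embedding: "module_hom scale (star_sc scale) (\<lambda>x. (x, 0))"
  unfolding module_hom_iff using module_star_sc vector_space_axioms
  by (simp add: star_sc_def module_iff_vector_space)

lemma dim_star_times_zero: "vector_space.dim (star_sc scale) (S \<times> {0}) = dim S"
proof -
  obtain B where B: "B \<subseteq> S" "independent B" "S \<subseteq> span B" "card B = dim S"
    using basis_exists by blast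
  let ?e = "\<lambda>x::'b. (x, 0::complex)"
  have inj: "inj ?e" by (auto intro: injI)
  have ind: "\<not> module.dependent (star_sc scale) (?e ` B)"
    using module_hom.independent_injective_image[OF module_hom_star_embedding B(2)] inj
    by (auto simp: inj_on_def)
  have "module.span (star_sc scale) (?e ` B) = ?e ` span B"
    by (rule module_hom.span_image[OF module_hom_star_embedding])
  then have "S \<times> {0} \<subseteq> module.span (star_sc scale) (?e ` B)" using B(3) by auto
  moreover have "?e ` B \<subseteq> S \<times> {0}" using B(1) by auto
  ultimately have "card (?e ` B) = vector_space.dim (star_sc scale) (S \<times> {0})"
    using vector_space.basis_card_eq_dim[OF vector_space_star_sc _ _ ind] by blast
  moreover have "card (?e ` B) = card B" using inj by (simp add: card_image inj_on_def)
  ultimately show ?thesis using B(4) by simp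
qed

lemma dim_star_line: "vector_space.dim (star_sc scale) ({0} \<times> UNIV) = 1"
proof -
  have "module.span (star_sc scale) {(0, 1)} = {0} \<times> UNIV"
    using module.span_singleton[OF module_star_sc, of "(0, 1)"] by (auto simp: star_sc_def)
  moreover have "\<not> module.dependent (star_sc scale) {(0::'b, 1::complex)}"
    using vector_space.dependent_single[OF vector_space_star_sc, of "(0::'b, 1::complex)"]
    by (simp add: zero_prod_def)
  ultimately have "card {(0::'b, 1::complex)} = vector_space.dim (star_sc scale) ({0} \<times> UNIV)"
    by (intro vector_space.basis_card_eq_dim[OF vector_space_star_sc]) auto
  then show ?thesis by simp
qed

lemma dim_star_zero: "vector_space.dim (star_sc scale) {0} = 0"
proof -
  have "card ({} :: ('b \<times> complex) set) = vector_space.dim (star_sc scale) {0}"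
    by (rule vector_space.basis_card_eq_dim[OF vector_space_star_sc])
      (auto simp: module.span_empty[OF module_star_sc] module.independent_empty[OF module_star_sc])
  then show ?thesis by simp
qed

lemma subrep_star_of_subrep:
  assumes sub: "is_subrep scale UNIV src tgt E \<rho> A"
    and Z: "Z = {0} \<or> (Z = {0} \<times> UNIV \<and> (\<forall>i k. k < nat (m i) \<longrightarrow> \<nu> i k \<in> A i))"
  shows "is_subrep (star_sc scale) (star_Ar m) (star_src src) (star_tgt tgt) (star_E E)
           (star_rho scale \<rho> \<nu>) (\<lambda>w. case w of None \<Rightarrow> Z | Some i \<Rightarrow> A i \<times> {0})"
proof -
  have sA: "subspace (A i)" "A i \<subseteq> E i" for i using sub unfolding is_subrep_def by auto
  have rA: "\<rho> b ` A (src b) \<subseteq> A (tgt b)" for b using sub unfolding is_subrep_def by auto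
  have subZ: "module.subspace (star_sc scale) Z"
    using Z module.subspace_single_0[OF module_star_sc]
    unfolding module.subspace_def[OF module_star_sc] by (auto simp: star_sc_def zero_prod_def)
  have subS: "module.subspace (star_sc scale) (A i \<times> {0})" for i
    using sA(1)[of i] unfolding module.subspace_def[OF module_star_sc]
    by (auto simp: star_sc_def subspace_def zero_prod_def)
  show ?thesis
    unfolding is_subrep_def
  proof (intro conjI allI ballI)
    fix w :: "'c option"
    show "module.subspace (star_sc scale) (case w of None \<Rightarrow> Z | Some i \<Rightarrow> A i \<times> {0})"
      using subZ subS by (cases w) auto
    show "(case w of None \<Rightarrow> Z | Some i \<Rightarrow> A i \<times> {0}) \<subseteq> star_E E w"
      using Z sA(2) by (cases w) (auto simp: zero_prod_def)
  next
    fix a :: "'a + 'c \<times> nat" assume a: "a \<in> star_Ar m"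
    show "star_rho scale \<rho> \<nu> a ` (case star_src src a of None \<Rightarrow> Z | Some i \<Rightarrow> A i \<times> {0})
          \<subseteq> (case star_tgt tgt a of None \<Rightarrow> Z | Some i \<Rightarrow> A i \<times> {0})"
    proof (cases a)
      case (Inl b)
      then show ?thesis using rA[of b] by auto
    next
      case (Inr ik)
      obtain i k where ik: "ik = (i, k)" by fastforce
      have "k < nat (m i)" using a Inr ik unfolding star_Ar_def by auto
      then show ?thesis
        using Z Inr ik subspace_0[OF sA(1)] subspace_scale[OF sA(1)] by (auto simp: zero_prod_def)
    qed
  qed
qed

lemma star_subrep_Some:
  assumes "is_subrep (star_sc scale) (star_Ar m) (star_src src) (star_tgt tgt) (star_E E)
           (star_rho scale \<rho> \<nu>) A'"
  shows "A' (Some i) = fst ` A' (Some i) \<times> {0}"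
proof -
  have "A' (Some i) \<subseteq> E i \<times> {0}" using assms unfolding is_subrep_def by force
  then show ?thesis by force
qed

lemma subrep_fst_star_subrep:
  assumes sub: "is_subrep (star_sc scale) (star_Ar m) (star_src src) (star_tgt tgt) (star_E E)
           (star_rho scale \<rho> \<nu>) A'"
  shows "is_subrep scale UNIV src tgt E \<rho> (\<lambda>i. fst ` A' (Some i))"
proof -
  have mem: "(x, 0) \<in> A' (Some i) \<longleftrightarrow> x \<in> fst ` A' (Some i)" for x i
    using star_subrep_Some[OF sub, of i] by blast
  have ss: "module.subspace (star_sc scale) (A' w)" "A' w \<subseteq> star_E E w" for w
    using sub unfolding is_subrep_def by auto
  show ?thesis
    unfolding is_subrep_def
  proof (intro conjI allI ballI)
    fix i
    have A': "0 \<in> A' (Some i)" "\<And>x y. x \<in> A' (Some i) \<Longrightarrow> y \<in> A' (Some i) \<Longrightarrow> x + y \<in> A' (Some i)"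
      "\<And>c x. x \<in> A' (Some i) \<Longrightarrow> star_sc scale c x \<in> A' (Some i)"
      using ss(1)[of "Some i"] unfolding module.subspace_def[OF module_star_sc] by auto
    show "subspace (fst ` A' (Some i))"
      unfolding subspace_def
    proof (intro conjI ballI allI)
      show "0 \<in> fst ` A' (Some i)" using A'(1) mem[of 0 i] by (simp add: zero_prod_def)
    next
      fix x y assume "x \<in> fst ` A' (Some i)" "y \<in> fst ` A' (Some i)"
      then have "(x, 0) + (y, 0) \<in> A' (Some i)" using mem A'(2) by blast
      then show "x + y \<in> fst ` A' (Some i)" using mem by simp
    next
      fix c x assume "x \<in> fst ` A' (Some i)"
      then have "star_sc scale c (x, 0) \<in> A' (Some i)" using mem A'(3) by blast
      then show "scale c x \<in> fst ` A' (Some i)" using mem by (simp add: star_sc_def)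
    qed
    show "fst ` A' (Some i) \<subseteq> E i" using ss(2)[of "Some i"] by auto
  next
    fix b :: 'a
    have "Inl b \<in> star_Ar m" unfolding star_Ar_def by blast
    then have "star_rho scale \<rho> \<nu> (Inl b) ` A' (star_src src (Inl b)) \<subseteq> A' (star_tgt tgt (Inl b))"
      using sub unfolding is_subrep_def by blast
    then have "(\<rho> b x, 0) \<in> A' (Some (tgt b))" if "(x, 0) \<in> A' (Some (src b))" for x
      using that by force
    then show "\<rho> b ` fst ` A' (Some (src b)) \<subseteq> fst ` A' (Some (tgt b))"
      using mem by blast
  qed
qed

lemma star_subrep_None_cases:
  assumes sub: "is_subrep (star_sc scale) (star_Ar m) (star_src src) (star_tgt tgt) (star_E E)
           (star_rho scale \<rho> \<nu>) A'"
  shows "A' None = {0} \<or> (A' None = {0} \<times> UNIV \<and> (\<forall>i k. k < nat (m i) \<longrightarrow> \<nu> i k \<in> fst ` A' (Some i)))"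
proof -
  have ss: "module.subspace (star_sc scale) (A' None)" and A'_sub: "A' None \<subseteq> {0} \<times> UNIV"
    using sub unfolding is_subrep_def by (metis star_E.simps(2))+
  show ?thesis
  proof (cases "A' None \<subseteq> {0}")
    case True
    then show ?thesis using module.subspace_0[OF module_star_sc ss] by blast
  next
    case False
    then obtain z where z: "z \<in> A' None" "z \<noteq> 0" by blast
    then obtain c where zc: "z = (0, c)" using A'_sub by blast
    with z(2) have c: "c \<noteq> 0" by (simp add: zero_prod_def)
    have full: "A' None = {0} \<times> UNIV"
    proof
      show "{0} \<times> UNIV \<subseteq> A' None"
      proof
        fix w :: "'b \<times> complex" assume "w \<in> {0} \<times> UNIV"
        then have "w = star_sc scale (snd w / c) z" using c zc by (auto simp: star_sc_def)
        also have "\<dots> \<in> A' None" by (rule module.subspace_scale[OF module_star_sc ss z(1)])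
        finally show "w \<in> A' None" .
      qed
    qed (rule A'_sub)
    have "\<nu> i k \<in> fst ` A' (Some i)" if k: "k < nat (m i)" for i k
    proof -
      have "Inr (i, k) \<in> star_Ar m" unfolding star_Ar_def using k by blast
      then have "star_rho scale \<rho> \<nu> (Inr (i, k)) ` A' None \<subseteq> A' (Some i)"
        using sub unfolding is_subrep_def by fastforce
      moreover have "(0, 1) \<in> A' None" using full by simp
      ultimately have "(\<nu> i k, 0) \<in> A' (Some i)" by force
      then show ?thesis by force
    qed
    with full show ?thesis by blast
  qed
qed

lemma wt_star:
  assumes "\<forall>i. A' (Some i) = A i \<times> {0}"
  shows "wt (star_wt \<eta> d) (dimvec (star_sc scale) A') =
     wt \<eta> (dimvec scale A) - wt \<eta> d * real (vector_space.dim (star_sc scale) (A' None))"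
  unfolding wt_option dimvec_def using assms dim_star_times_zero by (simp add: wt_def)

lemma semistable_star_iff:
  assumes rep: "is_rep scale UNIV src tgt E \<rho>" and dE: "dimvec scale E = d"
  shows "semistable (star_sc scale) (star_Ar m) (star_src src) (star_tgt tgt) (star_E E)
      (star_rho scale \<rho> \<nu>) (star_wt \<eta> d) \<longleftrightarrow>
    (\<forall>A. is_subrep scale UNIV src tgt E \<rho> A \<longrightarrow> wt \<eta> (dimvec scale A) \<le> 0) \<and>
    (\<forall>A. is_subrep scale UNIV src tgt E \<rho> A \<and> (\<forall>i k. k < nat (m i) \<longrightarrow> \<nu> i k \<in> A i) \<longrightarrow>
      wt \<eta> (dimvec scale A) \<le> wt \<eta> d)"
  (is "?L \<longleftrightarrow> ?R1 \<and> ?R2")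
proof -
  let ?sub = "is_subrep (star_sc scale) (star_Ar m) (star_src src) (star_tgt tgt) (star_E E) (star_rho scale \<rho> \<nu>)"
  let ?w = "\<lambda>A'. wt (star_wt \<eta> d) (dimvec (star_sc scale) A')"
  have "?w (star_E E) = wt \<eta> (dimvec scale E) - wt \<eta> d * real (vector_space.dim (star_sc scale) ({0} \<times> UNIV))"
    using wt_star[of "star_E E" E \<eta> d] by simp
  then have "?w (star_E E) = 0" using dim_star_line dE by simp
  then have L: "?L \<longleftrightarrow> (\<forall>A'. ?sub A' \<longrightarrow> ?w A' \<le> 0)"
    unfolding semistable_def by blast
  show ?thesis
  proof
    assume ?L
    then have le: "?w A' \<le> 0" if "?sub A'" for A' using that L by blast
    show "?R1 \<and> ?R2"
    proof (intro conjI allI impI)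
      fix A assume A: "is_subrep scale UNIV src tgt E \<rho> A"
      let ?A' = "\<lambda>w. case w of None \<Rightarrow> {0} | Some i \<Rightarrow> A i \<times> {0::complex}"
      have "?w ?A' \<le> 0" by (rule le[OF subrep_star_of_subrep[OF A]]) simp
      moreover have "?w ?A' = wt \<eta> (dimvec scale A) - wt \<eta> d * real (vector_space.dim (star_sc scale) {0})"
        using wt_star[of ?A' A \<eta> d] by simp
      ultimately show "wt \<eta> (dimvec scale A) \<le> 0" using dim_star_zero by simp
    next
      fix A assume A: "is_subrep scale UNIV src tgt E \<rho> A \<and> (\<forall>i k. k < nat (m i) \<longrightarrow> \<nu> i k \<in> A i)"
      let ?A' = "\<lambda>w. case w of None \<Rightarrow> {0} \<times> UNIV | Some i \<Rightarrow> A i \<times> {0::complex}"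
      have "?w ?A' \<le> 0" by (rule le[OF subrep_star_of_subrep[OF conjunct1[OF A]]]) (use A in simp)
      moreover have "?w ?A' = wt \<eta> (dimvec scale A) - wt \<eta> d * real (vector_space.dim (star_sc scale) ({0} \<times> UNIV))"
        using wt_star[of ?A' A \<eta> d] by simp
      ultimately show "wt \<eta> (dimvec scale A) \<le> wt \<eta> d" using dim_star_line by simp
    qed
  next
    assume R: "?R1 \<and> ?R2"
    have "?w A' \<le> 0" if A': "?sub A'" for A'
    proof -
      let ?A = "\<lambda>i. fst ` A' (Some i)"
      have sA: "is_subrep scale UNIV src tgt E \<rho> ?A" by (rule subrep_fst_star_subrep[OF A'])
      have w: "?w A' = wt \<eta> (dimvec scale ?A) - wt \<eta> d * real (vector_space.dim (star_sc scale) (A' None))"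
        by (rule wt_star) (use star_subrep_Some[OF A'] in blast)
      from star_subrep_None_cases[OF A'] show ?thesis
      proof
        assume "A' None = {0}"
        then show ?thesis using w dim_star_zero R sA by simp
      next
        assume "A' None = {0} \<times> UNIV \<and> (\<forall>i k. k < nat (m i) \<longrightarrow> \<nu> i k \<in> ?A i)"
        then show ?thesis using w dim_star_line R sA by simp
      qed
    qed
    then show ?L using L by blast
  qed
qed

lemma finite_subrep_dimvecs:
  fixes src tgt :: "'a \<Rightarrow> 'v::finite"
  assumes rep: "is_rep scale UNIV src tgt E \<rho>"
  shows "finite (dimvec scale ` {A. is_subrep scale UNIV src tgt E \<rho> A})"
proof (rule finite_subset)
  show "dimvec scale ` {A. is_subrep scale UNIV src tgt E \<rho> A} \<subseteq> Pi\<^sub>E UNIV (\<lambda>i. {..dimvec scale E i})"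
    using subrep_dim_le[OF rep] unfolding PiE_UNIV_domain dimvec_def by auto
qed (simp add: finite_PiE)

lemma coker_in_Tcat_iff:
  assumes rep: "is_rep scale UNIV src tgt E \<rho>" and \<nu>E: "\<forall>i k. k < nat (m i) \<longrightarrow> \<nu> i k \<in> E i"
  shows "coker_in_Tcat scale src tgt \<theta> m E \<rho> \<nu> \<longleftrightarrow>
    (\<forall>A. is_subrep scale UNIV src tgt E \<rho> A \<and> (\<forall>i k. k < nat (m i) \<longrightarrow> \<nu> i k \<in> A i) \<longrightarrow>
       dimvec scale A = dimvec scale E \<or> wt \<theta> (dimvec scale A) < wt \<theta> (dimvec scale E))"
proof
  assume T: "coker_in_Tcat scale src tgt \<theta> m E \<rho> \<nu>"
  show "\<forall>A. is_subrep scale UNIV src tgt E \<rho> A \<and> (\<forall>i k. k < nat (m i) \<longrightarrow> \<nu> i k \<in> A i) \<longrightarrow>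
       dimvec scale A = dimvec scale E \<or> wt \<theta> (dimvec scale A) < wt \<theta> (dimvec scale E)"
  proof (intro allI impI)
    fix A assume A: "is_subrep scale UNIV src tgt E \<rho> A \<and> (\<forall>i k. k < nat (m i) \<longrightarrow> \<nu> i k \<in> A i)"
    show "dimvec scale A = dimvec scale E \<or> wt \<theta> (dimvec scale A) < wt \<theta> (dimvec scale E)"
    proof (cases "dimvec scale A = dimvec scale E")
      case False
      then obtain i where "dim (A i) \<noteq> dim (E i)" unfolding dimvec_def by meson
      obtain F \<sigma> f where epi: "is_epi scale UNIV src tgt E \<rho> F \<sigma> f"
        and kill: "\<forall>i. \<forall>x\<in>A i. f i x = 0" and dF: "\<forall>i. dim (F i) = dim (E i) - dim (A i)"
        using quotient_by_subrep_exists[OF rep conjunct1[OF A]] by blast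
      have le: "dimvec scale A i \<le> dimvec scale E i" for i
        unfolding dimvec_def using subrep_dim_le[OF rep conjunct1[OF A]] .
      have "dim (F i) \<noteq> 0" using dF le[of i] \<open>dim (A i) \<noteq> dim (E i)\<close> unfolding dimvec_def by auto
      then have "F i \<noteq> {0}" using dim_le_card[of "{0}" "{}"] by auto
      with T epi kill A have "wt \<theta> (dimvec scale F) > 0" unfolding coker_in_Tcat_def by blast
      moreover have "dimvec scale F = (\<lambda>i. dimvec scale E i - dimvec scale A i)"
        using dF unfolding dimvec_def by simp
      ultimately show ?thesis
        using wt_diff[of "dimvec scale A" "dimvec scale E" \<theta>, OF le] by simp
    qed simp
  qed
next
  assume R: "\<forall>A. is_subrep scale UNIV src tgt E \<rho> A \<and> (\<forall>i k. k < nat (m i) \<longrightarrow> \<nu> i k \<in> A i) \<longrightarrow>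
       dimvec scale A = dimvec scale E \<or> wt \<theta> (dimvec scale A) < wt \<theta> (dimvec scale E)"
  show "coker_in_Tcat scale src tgt \<theta> m E \<rho> \<nu>"
    unfolding coker_in_Tcat_def
  proof (intro allI impI)
    fix F \<sigma> f
    assume asm: "is_epi scale UNIV src tgt E \<rho> F \<sigma> f \<and> (\<forall>i k. k < nat (m i) \<longrightarrow> f i (\<nu> i k) = 0)
      \<and> (\<exists>i. F i \<noteq> {0})"
    then have epi: "is_epi scale UNIV src tgt E \<rho> F \<sigma> f" by blast
    define K where "K i = {x\<in>E i. f i x = 0}" for i
    have K: "is_subrep scale UNIV src tgt E \<rho> K" "\<And>i. dim (F i) = dim (E i) - dim (K i)"
      unfolding K_def using kernel_of_epi[OF rep epi] by blast+
    have "\<forall>i k. k < nat (m i) \<longrightarrow> \<nu> i k \<in> K i" using asm \<nu>E unfolding K_def by blast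
    obtain i where "F i \<noteq> {0}" using asm by blast
    moreover have "fin_dim_sub scale (F i)" using epi unfolding is_epi_def is_rep_def by blast
    ultimately have "dim (F i) \<noteq> 0" using fin_dim_sub_dim_eq_0_iff by blast
    then have "dimvec scale K \<noteq> dimvec scale E" using K(2) unfolding dimvec_def by (metis diff_self_eq_0)
    with R K(1) \<open>\<forall>i k. k < nat (m i) \<longrightarrow> \<nu> i k \<in> K i\<close>
    have "wt \<theta> (dimvec scale K) < wt \<theta> (dimvec scale E)" by blast
    moreover have "dimvec scale F = (\<lambda>i. dimvec scale E i - dimvec scale K i)"
      using K(2) unfolding dimvec_def by simp
    moreover have "dimvec scale K i \<le> dimvec scale E i" for i
      unfolding dimvec_def using subrep_dim_le[OF rep K(1)] .
    ultimately show "wt \<theta> (dimvec scale F) > 0"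
      using wt_diff[of "dimvec scale K" "dimvec scale E" \<theta>] by simp
  qed
qed

lemma eventually_semistable_star_iff:
  fixes \<theta> :: "'v::finite \<Rightarrow> real"
  assumes rep: "is_rep scale UNIV src tgt E \<rho>" and dE: "dimvec scale E = d"
    and \<nu>E: "\<forall>i k. k < nat (m i) \<longrightarrow> \<nu> i k \<in> E i"
  shows "eventually (\<lambda>\<epsilon>. semistable (star_sc scale) (star_Ar m) (star_src src) (star_tgt tgt)
      (star_E E) (star_rho scale \<rho> \<nu>) (star_wt (\<lambda>i. \<theta> i - \<epsilon>) d)) (at_right 0)
    \<longleftrightarrow> in_Fcat scale src tgt \<theta> E \<rho> \<and> coker_in_Tcat scale src tgt \<theta> m E \<rho> \<nu>"
proof -
  let ?\<delta> = "wt (\<lambda>_::'v. 1)"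
  define Sub where "Sub = dimvec scale ` {A. is_subrep scale UNIV src tgt E \<rho> A}"
  define Sub\<nu> where "Sub\<nu> = dimvec scale ` {A. is_subrep scale UNIV src tgt E \<rho> A \<and>
    (\<forall>i k. k < nat (m i) \<longrightarrow> \<nu> i k \<in> A i)}"
  have le: "n i \<le> d i" if "n \<in> Sub" for n i
    using that subrep_dim_le[OF rep] dE[symmetric] unfolding Sub_def dimvec_def by auto
  have fin: "finite Sub" "finite Sub\<nu>"
    using finite_subrep_dimvecs[OF rep] unfolding Sub_def Sub\<nu>_def by (auto elim: finite_subset[rotated])
  have "Sub\<nu> \<subseteq> Sub" unfolding Sub_def Sub\<nu>_def by blast
  have SS: "semistable (star_sc scale) (star_Ar m) (star_src src) (star_tgt tgt) (star_E E)
      (star_rho scale \<rho> \<nu>) (star_wt (\<lambda>i. \<theta> i - \<epsilon>) d) \<longleftrightarrow>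
    (\<forall>n\<in>Sub. wt \<theta> n \<le> \<epsilon> * ?\<delta> n) \<and> (\<forall>n\<in>Sub\<nu>. \<epsilon> * (?\<delta> d - ?\<delta> n) \<le> wt \<theta> d - wt \<theta> n)" for \<epsilon>
  proof -
    have "(\<forall>n\<in>Sub. wt \<theta> n - \<epsilon> * ?\<delta> n \<le> 0) \<longleftrightarrow> (\<forall>n\<in>Sub. wt \<theta> n \<le> \<epsilon> * ?\<delta> n)"
      by simp
    moreover have "(\<forall>n\<in>Sub\<nu>. wt \<theta> n - \<epsilon> * ?\<delta> n \<le> wt \<theta> d - \<epsilon> * ?\<delta> d) \<longleftrightarrow>
        (\<forall>n\<in>Sub\<nu>. \<epsilon> * (?\<delta> d - ?\<delta> n) \<le> wt \<theta> d - wt \<theta> n)"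
      by (intro ball_cong refl) (simp add: right_diff_distrib; linarith)
    ultimately show ?thesis
      unfolding semistable_star_iff[OF rep dE] wt_shift Sub_def Sub\<nu>_def by blast
  qed
  have "eventually (\<lambda>\<epsilon>. semistable (star_sc scale) (star_Ar m) (star_src src) (star_tgt tgt)
      (star_E E) (star_rho scale \<rho> \<nu>) (star_wt (\<lambda>i. \<theta> i - \<epsilon>) d)) (at_right 0) \<longleftrightarrow>
    (\<forall>n\<in>Sub. eventually (\<lambda>\<epsilon>. wt \<theta> n \<le> \<epsilon> * ?\<delta> n) (at_right 0)) \<and>
    (\<forall>n\<in>Sub\<nu>. eventually (\<lambda>\<epsilon>. \<epsilon> * (?\<delta> d - ?\<delta> n) \<le> wt \<theta> d - wt \<theta> n) (at_right 0))"
    unfolding SS eventually_conj_iff eventually_ball_finite_distrib[OF fin(1)]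
      eventually_ball_finite_distrib[OF fin(2)] ..
  also have "\<dots> \<longleftrightarrow> (\<forall>n\<in>Sub. wt \<theta> n \<le> 0) \<and> (\<forall>n\<in>Sub\<nu>. n = d \<or> wt \<theta> n < wt \<theta> d)"
  proof -
    have "(\<forall>n\<in>Sub. eventually (\<lambda>\<epsilon>. wt \<theta> n \<le> \<epsilon> * ?\<delta> n) (at_right 0)) \<longleftrightarrow> (\<forall>n\<in>Sub. wt \<theta> n \<le> 0)"
      by (intro ball_cong refl eventually_at_right_0_le_mult_iff wt_one_nonneg)
    moreover have "(\<forall>n\<in>Sub\<nu>. eventually (\<lambda>\<epsilon>. \<epsilon> * (?\<delta> d - ?\<delta> n) \<le> wt \<theta> d - wt \<theta> n) (at_right 0)) \<longleftrightarrow>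
        (\<forall>n\<in>Sub\<nu>. n = d \<or> wt \<theta> n < wt \<theta> d)"
      using le \<open>Sub\<nu> \<subseteq> Sub\<close> by (intro ball_cong refl eventually_at_right_0_wt_le_iff) blast
    ultimately show ?thesis by argo
  qed
  also have "\<dots> \<longleftrightarrow> in_Fcat scale src tgt \<theta> E \<rho> \<and> coker_in_Tcat scale src tgt \<theta> m E \<rho> \<nu>"
    unfolding in_Fcat_def coker_in_Tcat_iff[OF rep \<nu>E] Sub_def Sub\<nu>_def dE by simp
  finally show ?thesis .
qed

end

theorem mainTheorem12:
  fixes src tgt :: "'a \<Rightarrow> 'v::finite"
    and I :: "(('v \<times> 'a list) \<Rightarrow> complex) set"
    and m :: "'v \<Rightarrow> int" and d :: "'v \<Rightarrow> nat" and \<theta> :: "'v \<Rightarrow> real"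
    and sc :: "complex \<Rightarrow> 'e::ab_group_add \<Rightarrow> 'e"
    and E :: "'v \<Rightarrow> 'e set" and \<rho> :: "'a \<Rightarrow> 'e \<Rightarrow> 'e" and \<nu> :: "'v \<Rightarrow> nat \<Rightarrow> 'e"
  assumes "admissible_ideal src tgt I"
    and "M_plus m"
    and "vector_space sc"
    and "is_rep sc UNIV src tgt E \<rho>"
    and "\<forall>r\<in>I. annihilates sc tgt E \<rho> r"
    and "dimvec sc E = d"
    and "\<forall>i k. k < nat (m i) \<longrightarrow> \<nu> i k \<in> E i"
  shows "(\<exists>\<epsilon>0>0. \<forall>\<epsilon>. 0 < \<epsilon> \<and> \<epsilon> < \<epsilon>0 \<longrightarrow>
            semistable (star_sc sc) (star_Ar m) (star_src src) (star_tgt tgt)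
              (star_E E) (star_rho sc \<rho> \<nu>) (star_wt (\<lambda>i. \<theta> i - \<epsilon>) d))
         \<longleftrightarrow> in_Fcat sc src tgt \<theta> E \<rho> \<and> coker_in_Tcat sc src tgt \<theta> m E \<rho> \<nu>"
proof -
  interpret complex_vector_space sc using assms(3) by (simp add: complex_vector_space_def)
  have "(\<exists>\<epsilon>0>0. \<forall>\<epsilon>. 0 < \<epsilon> \<and> \<epsilon> < \<epsilon>0 \<longrightarrow> P \<epsilon>) \<longleftrightarrow> eventually P (at_right 0)" for P :: "real \<Rightarrow> bool"
    unfolding eventually_at_right_field by auto
  then show ?thesis using eventually_semistable_star_iff[OF assms(4,6,7)] by simp
qed

end
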